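(* Let $q\in(0,\infty]$ and $\delta>0$. Let $(g_j)_{j\in\mathbb Z}$ be measurable functions $g_j:N\to[0,\infty)$ and define $h_\ell=\sum_{j\in\mathbb Z}2^{-|j-\ell|\delta}g_j$ for $\ell\in\mathbb Z$. Suppose there is $C_1>0$ such that for all $j\in\mathbb Z$ and all $B\in\mathcal B_{-j}$, $\operatorname{ess\,sup}_{x\in B}|g_j(x)|\le C_1\operatorname{ess\,inf}_{x\in B}|g_j(x)|$. Then there is $C_2=C_2(\delta,q,C_1)>0$ with $\|(h_\ell)_{\ell\in\mathbb Z}\|_{\mathcal C_q}\le C_2\|(g_j)_{j\in\mathbb Z}\|_{\mathcal C_q}$.
   Context: Let $N$ be a homogeneous group: a connected, simply connected nilpotent Lie group whose Lie algebra carries a family of dilations $D_t=\exp(A\ln t)$, $t>0$ (Lie algebra automorphisms, $A$ diagonalizable with positive eigenvalues $1\le v_1\le\dots\le v_d$); the group dilations are $\delta_t=\exp_N\circ D_t\circ\exp_N^{-1}$, and $Q=v_1+\dots+v_d$ is the homogeneous dimension. $\mu_N$ is a Haar measure on $N$. Fix a homogeneous quasi-norm $|\cdot|$ on $N$ (continuous, $|x^{-1}|=|x|$, $|\delta_tx|=t|x|$, $|x|=0$ iff $x$ is the identity) and a constant $\gamma\ge1$ with $|xy|\le\gamma(|x|+|y|)$ for all $x,y$; $B_r(x)=\{y\in N:|y^{-1}x|<r\}$. Dyadic balls: fix a maximal family $\{B_{(2\gamma)^{-1}}(x_l)\}_{l\in\mathbb N}$ of pairwise disjoint balls and set $B^k_l=B_{2^k}(\delta_{2^k}(x_l))$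 for $k\in\mathbb Z$, $l\in\mathbb N$; $\mathcal B_k=\{B^k_l:l\in\mathbb N\}$. For a sequence $(g_j)_{j\in\mathbb Z}$ of measurable functions, $\|(g_j)_j\|_{\mathcal C_q}=\sup_{k\in\mathbb Z,l\in\mathbb N}\big(\frac{1}{\mu_N(B^k_l)}\int_{B^k_l}\sum_{j\ge-k}|g_j|^q\,d\mu_N\big)^{1/q}$ if $q<\infty$, and $\|(g_j)_j\|_{\mathcal C_\infty}=\sup_{k,l}\sup_{j\ge-k}\frac{1}{\mu_N(B^k_l)}\int_{B^k_l}|g_j|\,d\mu_N$. *)

theory Defs
  imports "HOL-Analysis.Analysis" "HOL-Probability.Probability"
begin

definition pderiv_dir :: "'a::euclidean_space \<Rightarrow> ('a \<Rightarrow> real) \<Rightarrow> 'a \<Rightarrow> real" where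
  "pderiv_dir b f x = (THE l. ((\<lambda>t. f (x + t *\<^sub>R b)) has_real_derivative l) (at 0))"

fun iter_pderiv :: "'a::euclidean_space list \<Rightarrow> ('a \<Rightarrow> real) \<Rightarrow> 'a \<Rightarrow> real" where
  "iter_pderiv [] f = f"
| "iter_pderiv (b # ds) f = pderiv_dir b (iter_pderiv ds f)"

definition smooth_fun :: "('a::euclidean_space \<Rightarrow> real) \<Rightarrow> bool" where
  "smooth_fun f \<longleftrightarrow> (\<forall>ds. set ds \<subseteq> Basis \<longrightarrow>
      continuous_on UNIV (iter_pderiv ds f) \<and>
      (\<forall>b\<in>Basis. \<forall>x. (\<lambda>t. iter_pderiv ds f (x + t *\<^sub>R b)) differentiable (at 0)))"

text \<open>The group N is modelled in exponential coordinates: N = Lie algebra = 'a (a Euclidean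
  space), exp is the identity map.  The coordinates are chosen along an eigenbasis of A,
  so A is diagonal w.r.t. Basis with eigenvalues v b; hence D_t = delta_t is given below.\<close>

definition dil :: "('a::euclidean_space \<Rightarrow> real) \<Rightarrow> real \<Rightarrow> 'a \<Rightarrow> 'a" where
  "dil v t x = (\<Sum>b\<in>Basis. (t powr v b * (x \<bullet> b)) *\<^sub>R b)"

definition homogeneous_group :: "('a::euclidean_space \<Rightarrow> 'a \<Rightarrow> 'a) \<Rightarrow> ('a \<Rightarrow> real) \<Rightarrow> bool" where
  "homogeneous_group gm v \<longleftrightarrow>
     (\<forall>x y z. gm (gm x y) z = gm x (gm y z)) \<and>
     (\<forall>x. gm 0 x = x \<and> gm x 0 = x) \<and>
     \<comment> \<open>exponential coordinates: lines through 0 are the one-parameter subgroups\<close>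
     (\<forall>x s t. gm (s *\<^sub>R x) (t *\<^sub>R x) = (s + t) *\<^sub>R x) \<and>
     \<comment> \<open>smooth (Lie) group law\<close>
     (\<forall>c\<in>Basis. smooth_fun (\<lambda>p::'a \<times> 'a. gm (fst p) (snd p) \<bullet> c)) \<and>
     \<comment> \<open>eigenvalues of A: at least 1\<close>
     (\<forall>b\<in>Basis. 1 \<le> v b) \<and>
     \<comment> \<open>dilations are automorphisms\<close>
     (\<forall>t>0. \<forall>x y. dil v t (gm x y) = gm (dil v t x) (dil v t y))"

definition haar_measure :: "('a::euclidean_space \<Rightarrow> 'a \<Rightarrow> 'a) \<Rightarrow> 'a measure \<Rightarrow> bool" where
  "haar_measure gm \<mu> \<longleftrightarrow>
     sets \<mu> = sets borel \<and>
     (\<forall>x. \<forall>E\<in>sets borel. emeasure \<mu> (gm x ` E) = emeasure \<mu> E) \<and>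
     (\<forall>K. compact K \<longrightarrow> emeasure \<mu> K < \<infinity>) \<and>
     emeasure \<mu> UNIV \<noteq> 0"

definition hom_quasi_norm ::
  "('a::euclidean_space \<Rightarrow> 'a \<Rightarrow> 'a) \<Rightarrow> ('a \<Rightarrow> real) \<Rightarrow> ('a \<Rightarrow> real) \<Rightarrow> real \<Rightarrow> bool" where
  "hom_quasi_norm gm v nrm \<gamma> \<longleftrightarrow>
     continuous_on UNIV nrm \<and>
     (\<forall>x. 0 \<le> nrm x) \<and>
     (\<forall>x. nrm (- x) = nrm x) \<and>
     (\<forall>t>0. \<forall>x. nrm (dil v t x) = t * nrm x) \<and>
     (\<forall>x. nrm x = 0 \<longleftrightarrow> x = 0) \<and>
     1 \<le> \<gamma> \<and> (\<forall>x y. nrm (gm x y) \<le> \<gamma> * (nrm x + nrm y))"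

text \<open>Quasi-balls B_r(x) = {y. |y^{-1} x| < r}; the group inverse of y is - y.\<close>
definition qball :: "('a::euclidean_space \<Rightarrow> 'a \<Rightarrow> 'a) \<Rightarrow> ('a \<Rightarrow> real) \<Rightarrow> real \<Rightarrow> 'a \<Rightarrow> 'a set" where
  "qball gm nrm r x = {y. nrm (gm (- y) x) < r}"

definition maximal_disjoint_centres ::
  "('a::euclidean_space \<Rightarrow> 'a \<Rightarrow> 'a) \<Rightarrow> ('a \<Rightarrow> real) \<Rightarrow> real \<Rightarrow> (nat \<Rightarrow> 'a) \<Rightarrow> bool" where
  "maximal_disjoint_centres gm nrm \<gamma> xs \<longleftrightarrow>
     (\<forall>l m. l \<noteq> m \<longrightarrow> qball gm nrm (1 / (2 * \<gamma>)) (xs l) \<inter> qball gm nrm (1 / (2 * \<gamma>)) (xs m) = {}) \<and>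
     (\<forall>y. \<exists>l. qball gm nrm (1 / (2 * \<gamma>)) y \<inter> qball gm nrm (1 / (2 * \<gamma>)) (xs l) \<noteq> {})"

definition dyball ::
  "('a::euclidean_space \<Rightarrow> 'a \<Rightarrow> 'a) \<Rightarrow> ('a \<Rightarrow> real) \<Rightarrow> ('a \<Rightarrow> real) \<Rightarrow> (nat \<Rightarrow> 'a) \<Rightarrow> int \<Rightarrow> nat \<Rightarrow> 'a set" where
  "dyball gm v nrm xs k l = qball gm nrm (2 powr k) (dil v (2 powr k) (xs l))"

definition esssup_on :: "'a measure \<Rightarrow> 'a set \<Rightarrow> ('a \<Rightarrow> real) \<Rightarrow> ereal" where
  "esssup_on \<mu> B f = esssup (restrict_space \<mu> B) (\<lambda>x. ereal \<bar>f x\<bar>)"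

definition essinf_on :: "'a measure \<Rightarrow> 'a set \<Rightarrow> ('a \<Rightarrow> real) \<Rightarrow> ereal" where
  "essinf_on \<mu> B f = - esssup (restrict_space \<mu> B) (\<lambda>x. - ereal \<bar>f x\<bar>)"

definition enn_powr :: "ennreal \<Rightarrow> real \<Rightarrow> ennreal" where
  "enn_powr x p = (if x = \<infinity> then \<infinity> else ennreal (enn2real x powr p))"

definition carleson_norm ::
  "('a::euclidean_space \<Rightarrow> 'a \<Rightarrow> 'a) \<Rightarrow> ('a \<Rightarrow> real) \<Rightarrow> ('a \<Rightarrow> real) \<Rightarrow> (nat \<Rightarrow> 'a) \<Rightarrow> 'a measure
    \<Rightarrow> ennreal \<Rightarrow> (int \<Rightarrow> 'a \<Rightarrow> ennreal) \<Rightarrow> ennreal" where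
  "carleson_norm gm v nrm xs \<mu> q g =
    (if q = \<infinity> then
       (SUP kl\<in>(UNIV :: (int \<times> nat) set). SUP j\<in>{- fst kl..}.
          (\<integral>\<^sup>+ x\<in>dyball gm v nrm xs (fst kl) (snd kl). g j x \<partial>\<mu>)
            / emeasure \<mu> (dyball gm v nrm xs (fst kl) (snd kl)))
     else
       (SUP kl\<in>(UNIV :: (int \<times> nat) set).
          enn_powr ((\<integral>\<^sup>+ x\<in>dyball gm v nrm xs (fst kl) (snd kl).
                       (\<integral>\<^sup>+ j. enn_powr (g j x) (enn2real q) \<partial>count_space {- fst kl..}) \<partial>\<mu>)
                     / emeasure \<mu> (dyball gm v nrm xs (fst kl) (snd kl)))
                   (1 / enn2real q)))"

end

theory Submission
  imports Defs
begin

text \<open>Let \<open>m\<close> be the \<open>C_q\<close> norm of \<open>g\<close>. On a ball \<open>B\<close> of level \<open>- j\<close> the \<open>L^q\<close> average of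
  \<open>g j\<close> is at most \<open>m\<close>, hence so is its essential infimum, and regularity gives \<open>g j \<le> C\<^sub>1 m\<close>
  almost everywhere on \<open>B\<close>. The balls of each level cover \<open>N\<close>, so \<open>g j \<le> C\<^sub>1 m\<close> almost
  everywhere. Now fix a ball of level \<open>k\<close> and \<open>l \<ge> - k\<close>. In \<open>h l\<close> the terms with \<open>j \<ge> - k\<close>
  are controlled by the Carleson data of \<open>g\<close> on that ball, and the others are at most
  \<open>C\<^sub>1 m 2 powr (- \<bar>l + k\<bar> \<delta>)\<close>, a summable geometric tail. For \<open>q < \<infinity>\<close> half of the
  decay of the kernel is first used to pass from \<open>h l\<close> to a supremum, so that \<open>(h l) powr q\<close>
  becomes a convolution of \<open>g j powr q\<close> with a summable kernel, and summing over \<open>l\<close> costs one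
  more geometric factor.\<close>

section \<open>Homogeneous groups and quasi-norms\<close>

context
  fixes gm :: "'a::euclidean_space \<Rightarrow> 'a \<Rightarrow> 'a" and v :: "'a \<Rightarrow> real"
  assumes hg: "homogeneous_group gm v"
begin

lemma hom_group_assoc: "gm (gm x y) z = gm x (gm y z)"
  using hg unfolding homogeneous_group_def by blast

lemma hom_group_zero [simp]: "gm 0 x = x" "gm x 0 = x"
  using hg unfolding homogeneous_group_def by blast+

text \<open>In exponential coordinates the inverse of \<open>x\<close> is \<open>-x\<close>, since \<open>x\<close> and \<open>-x\<close> lie on one
  one-parameter subgroup.\<close>

lemma hom_group_inverse [simp]: "gm x (- x) = 0" "gm (- x) x = 0"
proof -
  have line: "gm (s *\<^sub>R x) (t *\<^sub>R x) = (s + t) *\<^sub>R x" for s t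
    using hg unfolding homogeneous_group_def by blast
  show "gm x (- x) = 0" using line[of 1 "-1"] by simp
  show "gm (- x) x = 0" using line[of "-1" 1] by simp
qed

lemma hom_group_cancel [simp]: "gm b (gm (- b) x) = x" "gm (- b) (gm b x) = x"
  by (simp_all flip: hom_group_assoc)

lemma hom_group_inverse_unique: "gm u z = 0 \<Longrightarrow> z = - u"
  by (metis hom_group_cancel(2) hom_group_zero(2))

lemma hom_group_minus_mult: "- gm a b = gm (- b) (- a)"
  by (rule hom_group_inverse_unique[symmetric]) (simp add: hom_group_assoc)

lemma hom_group_dil_mult: "t > 0 \<Longrightarrow> dil v t (gm x y) = gm (dil v t x) (dil v t y)"
  using hg unfolding homogeneous_group_def by blast

lemma hom_group_weights_ge_1: "b \<in> Basis \<Longrightarrow> 1 \<le> v b"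
  using hg unfolding homogeneous_group_def by blast

lemma continuous_on_hom_group_mult: "continuous_on UNIV (\<lambda>p. gm (fst p) (snd p))"
proof -
  have coord: "continuous_on UNIV (\<lambda>p. gm (fst p) (snd p) \<bullet> c)" if "c \<in> Basis" for c
  proof -
    have "smooth_fun (\<lambda>p::'a \<times> 'a. gm (fst p) (snd p) \<bullet> c)"
      using hg that unfolding homogeneous_group_def by blast
    then show ?thesis
      unfolding smooth_fun_def by (metis empty_subsetI iter_pderiv.simps(1) list.set(1))
  qed
  have "continuous_on UNIV (\<lambda>p. \<Sum>c\<in>Basis. (gm (fst p) (snd p) \<bullet> c) *\<^sub>R c)"
    by (intro continuous_on_sum continuous_on_scaleR coord continuous_on_const)
  then show ?thesis by (simp add: euclidean_representation)
qed

lemma continuous_on_hom_group_translates: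
  "continuous_on UNIV (\<lambda>w. gm c (- w))" "continuous_on UNIV (\<lambda>y. gm (- y) c)"
proof -
  have "continuous_on UNIV ((\<lambda>p. gm (fst p) (snd p)) \<circ> (\<lambda>w. (c, - w)))"
    by (rule continuous_on_compose[OF _ continuous_on_subset[OF continuous_on_hom_group_mult]])
      (auto intro!: continuous_intros)
  then show "continuous_on UNIV (\<lambda>w. gm c (- w))" by (simp add: o_def)
  have "continuous_on UNIV ((\<lambda>p. gm (fst p) (snd p)) \<circ> (\<lambda>y. (- y, c)))"
    by (rule continuous_on_compose[OF _ continuous_on_subset[OF continuous_on_hom_group_mult]])
      (auto intro!: continuous_intros)
  then show "continuous_on UNIV (\<lambda>y. gm (- y) c)" by (simp add: o_def)
qed

end

lemma dil_inner: "b \<in> Basis \<Longrightarrow> dil v t x \<bullet> b = t powr v b * (x \<bullet> b)"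
  unfolding dil_def by (simp add: inner_sum_left_Basis)

lemma dil_uminus: "dil v t (- x) = - dil v t x"
  by (rule euclidean_eqI) (simp add: dil_inner)

lemma dil_dil: "s > 0 \<Longrightarrow> t > 0 \<Longrightarrow> dil v s (dil v t x) = dil v (s * t) x"
  by (rule euclidean_eqI) (simp add: dil_inner powr_mult)

lemma dil_one [simp]: "dil v 1 x = x"
  by (rule euclidean_eqI) (simp add: dil_inner)

lemma dil_zero [simp]: "dil v 0 x = 0"
  by (rule euclidean_eqI) (simp add: dil_inner)

lemma continuous_on_dil: "continuous_on UNIV (dil v t)"
  unfolding dil_def by (intro continuous_intros)

lemma continuous_on_dil_parameter:
  assumes "\<And>b. b \<in> Basis \<Longrightarrow> 1 \<le> v b"
  shows "continuous_on {0..1} (\<lambda>t. dil v t x)"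
  unfolding dil_def
  using assms by (intro continuous_intros continuous_on_powr' continuous_on_id) force+

context
  fixes gm :: "'a::euclidean_space \<Rightarrow> 'a \<Rightarrow> 'a" and v :: "'a \<Rightarrow> real"
    and nrm :: "'a \<Rightarrow> real" and \<gamma> :: real
  assumes hg: "homogeneous_group gm v" and hq: "hom_quasi_norm gm v nrm \<gamma>"
begin

lemma continuous_on_quasi_norm: "continuous_on UNIV nrm"
  and quasi_norm_nonneg: "0 \<le> nrm x"
  and quasi_norm_uminus: "nrm (- x) = nrm x"
  and quasi_norm_dil: "t > 0 \<Longrightarrow> nrm (dil v t x) = t * nrm x"
  and quasi_norm_eq_0_iff: "nrm x = 0 \<longleftrightarrow> x = 0"
  and quasi_norm_constant_ge_1: "1 \<le> \<gamma>"
  and quasi_norm_triangle: "nrm (gm x y) \<le> \<gamma> * (nrm x + nrm y)"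
  using hq unfolding hom_quasi_norm_def by auto

text \<open>The minimum of \<open>nrm\<close> on the Euclidean unit sphere is positive, and every point with
  Euclidean norm at least \<open>1\<close> is dilated onto that sphere by some \<open>t \<le> 1\<close>.\<close>

lemma quasi_norm_small_imp_norm_less_1: "\<exists>m>0. \<forall>x. nrm x < m \<longrightarrow> norm x < 1"
proof -
  obtain b :: 'a where "b \<in> Basis" using nonempty_Basis by blast
  then have "sphere (0::'a) 1 \<noteq> {}" by (metis empty_iff mem_sphere_0 norm_Basis)
  then obtain x0 where x0: "x0 \<in> sphere (0::'a) 1" and min: "\<forall>y\<in>sphere 0 1. nrm x0 \<le> nrm y"
    using continuous_attains_inf[OF compact_sphere _ continuous_on_subset[OF continuous_on_quasi_norm]]
    by blast
  have pos: "nrm x0 > 0"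
    using x0 quasi_norm_nonneg[of x0] quasi_norm_eq_0_iff[of x0] by fastforce
  have "norm x < 1" if small: "nrm x < nrm x0" for x
  proof (rule ccontr)
    assume "\<not> norm x < 1"
    moreover have "continuous_on {0..1} (\<lambda>t. norm (dil v t x))"
      by (intro continuous_on_norm continuous_on_dil_parameter hom_group_weights_ge_1[OF hg])
    ultimately obtain t where t: "0 \<le> t" "t \<le> 1" "norm (dil v t x) = 1"
      using IVT'[of "\<lambda>t. norm (dil v t x)" 0 1 1] by auto
    then have "t > 0" by (metis dil_zero norm_zero order_le_less zero_neq_one)
    have "nrm x0 \<le> nrm (dil v t x)" using min t by simp
    also have "\<dots> = t * nrm x" using quasi_norm_dil[OF \<open>t > 0\<close>] .
    also have "\<dots> \<le> nrm x" using t quasi_norm_nonneg[of x] by (simp add: mult_left_le_one_le)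
    finally show False using small by simp
  qed
  with pos show ?thesis by blast
qed

lemma quasi_norm_sublevel_compact: "r > 0 \<Longrightarrow> \<exists>K. compact K \<and> {x. nrm x < r} \<subseteq> K"
proof -
  assume r: "r > 0"
  obtain m where m: "m > 0" "\<forall>x. nrm x < m \<longrightarrow> norm x < 1"
    using quasi_norm_small_imp_norm_less_1 by blast
  have "{x. nrm x < r} \<subseteq> dil v (r / m) ` cball 0 1"
  proof
    fix x assume "x \<in> {x. nrm x < r}"
    then have "nrm (dil v (m / r) x) < m"
      using quasi_norm_dil[of "m / r" x] m r by (simp add: divide_less_eq mult_strict_left_mono)
    then have "dil v (m / r) x \<in> cball 0 1" using m by fastforce
    moreover have "x = dil v (r / m) (dil v (m / r) x)" using m r by (simp add: dil_dil)
    ultimately show "x \<in> dil v (r / m) ` cball 0 1" by blast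
  qed
  moreover have "compact (dil v (r / m) ` cball 0 1)"
    by (rule compact_continuous_image[OF continuous_on_subset[OF continuous_on_dil] compact_cball])
      simp
  ultimately show ?thesis by blast
qed

lemma qball_subset_compact: "\<exists>K. compact K \<and> qball gm nrm r c \<subseteq> K"
proof (cases "r > 0")
  case False
  then have "qball gm nrm r c = {}"
    using quasi_norm_nonneg unfolding qball_def by (auto simp: not_less intro: order.trans)
  then show ?thesis by blast
next
  case True
  then obtain K where K: "compact K" "{x. nrm x < r} \<subseteq> K"
    using quasi_norm_sublevel_compact by blast
  have "qball gm nrm r c \<subseteq> (\<lambda>w. gm c (- w)) ` K"
  proof
    fix y assume "y \<in> qball gm nrm r c"
    then have "gm (- y) c \<in> K" using K(2) unfolding qball_def by auto
    moreover have "y = gm c (- gm (- y) c)"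
      by (simp add: hom_group_minus_mult[OF hg] hom_group_cancel[OF hg])
    ultimately show "y \<in> (\<lambda>w. gm c (- w)) ` K" by blast
  qed
  moreover have "compact ((\<lambda>w. gm c (- w)) ` K)"
    by (rule compact_continuous_image[OF continuous_on_subset K(1)])
      (auto intro: continuous_on_hom_group_translates(1)[OF hg])
  ultimately show ?thesis by blast
qed

lemma open_qball: "open (qball gm nrm r c)"
proof -
  have "continuous_on UNIV (\<lambda>y. nrm (gm (- y) c))"
    by (rule continuous_on_compose2[OF continuous_on_quasi_norm
          continuous_on_hom_group_translates(2)[OF hg]]) auto
  then show ?thesis unfolding qball_def
    by (intro open_Collect_less) (auto intro: continuous_intros)
qed

text \<open>By maximality, the ball of radius \<open>1 / (2 * \<gamma>)\<close> about \<open>dil v (2 powr - k) y\<close> meets one about a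
  centre, and the quasi-triangle inequality puts that centre at distance less than \<open>1\<close>.\<close>

lemma dyball_covers:
  assumes md: "maximal_disjoint_centres gm nrm \<gamma> xs"
  shows "\<exists>l. y \<in> dyball gm v nrm xs k l"
proof -
  define s where "s = (2::real) powr k"
  have s: "s > 0" unfolding s_def by simp
  define y' where "y' = dil v (1 / s) y"
  have y: "y = dil v s y'" unfolding y'_def using s by (simp add: dil_dil)
  define r where "r = 1 / (2 * \<gamma>)"
  obtain l z where z: "z \<in> qball gm nrm r y'" "z \<in> qball gm nrm r (xs l)"
    using md unfolding maximal_disjoint_centres_def r_def by blast
  have "gm (- y') (xs l) = gm (gm (- y') z) (gm (- z) (xs l))"
    by (simp add: hom_group_assoc[OF hg] hom_group_cancel[OF hg])
  moreover have "nrm (gm (- y') z) = nrm (gm (- z) y')"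
    by (metis hom_group_minus_mult[OF hg] minus_minus quasi_norm_uminus)
  ultimately have "nrm (gm (- y') (xs l)) \<le> \<gamma> * (nrm (gm (- z) y') + nrm (gm (- z) (xs l)))"
    using quasi_norm_triangle by metis
  also have "\<dots> < \<gamma> * (r + r)"
    using z quasi_norm_constant_ge_1 unfolding qball_def by (intro mult_strict_left_mono) auto
  also have "\<dots> = 1" unfolding r_def using quasi_norm_constant_ge_1 by simp
  finally have "nrm (gm (- y') (xs l)) < 1" .
  moreover have "gm (- y) (dil v s (xs l)) = dil v s (gm (- y') (xs l))"
    using y s by (simp add: hom_group_dil_mult[OF hg] dil_uminus)
  ultimately have "nrm (gm (- y) (dil v s (xs l))) < s"
    using quasi_norm_dil[OF s] s by simp
  then show ?thesis unfolding dyball_def qball_def s_def by blast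
qed

end

section \<open>Extended real powers, averages and the geometric kernel\<close>

lemma enn_powr_ennreal: "0 \<le> y \<Longrightarrow> enn_powr (ennreal y) p = ennreal (y powr p)"
  unfolding enn_powr_def by simp

lemma enn_powr_less_top: "x < \<infinity> \<Longrightarrow> enn_powr x p < \<infinity>"
  unfolding enn_powr_def by simp

lemma enn_powr_mono: assumes "x \<le> y" "p > 0" shows "enn_powr x p \<le> enn_powr y p"
proof (cases "y = \<infinity>")
  case False
  then have "x \<noteq> \<infinity>" "enn2real x \<le> enn2real y"
    using assms(1) by (auto simp: enn2real_mono top.not_eq_extremum top.extremum_unique)
  then show ?thesis using False assms unfolding enn_powr_def by (simp add: powr_mono2 ennreal_leI)
qed (simp add: enn_powr_def)

lemma enn_powr_mult: assumes "p > 0" shows "enn_powr (x * y) p = enn_powr x p * enn_powr y p"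
proof (cases "x = \<infinity> \<or> y = \<infinity>")
  case True
  have pos: "ennreal (enn2real z powr p) \<noteq> 0" if "z \<noteq> 0" "z \<noteq> \<top>" for z
    using that by (simp add: enn2real_eq_0_iff)
  show ?thesis using True unfolding enn_powr_def
    by (cases "x = 0"; cases "y = 0")
      (auto simp: ennreal_mult_eq_top_iff ennreal_top_mult ennreal_mult_top pos enn2real_eq_0_iff)
next
  case False
  then show ?thesis using assms unfolding enn_powr_def
    by (simp add: ennreal_mult_eq_top_iff enn2real_mult powr_mult ennreal_mult)
qed

lemma enn_powr_enn_powr_inverse: "p > 0 \<Longrightarrow> enn_powr (enn_powr x p) (1 / p) = x"
  unfolding enn_powr_def by (simp add: powr_powr ennreal_enn2real_if)

lemma enn_powr_inverse_le_ennreal_imp: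
  assumes "enn_powr x (1 / p) \<le> ennreal m" "p > 0" "m \<ge> 0"
  shows "x \<le> ennreal (m powr p)"
  using enn_powr_mono[OF assms(1), of p] assms
  by (simp add: enn_powr_enn_powr_inverse[of "1 / p", simplified] enn_powr_ennreal)

lemma one_le_enn_powr: "1 \<le> x \<Longrightarrow> r > 0 \<Longrightarrow> 1 \<le> enn_powr x r"
  using enn_powr_mono[of 1 x r] by (simp add: enn_powr_ennreal[of 1, simplified])

lemma borel_measurable_nn_integral_count_space [measurable]:
  fixes f :: "'i::countable \<Rightarrow> 'a \<Rightarrow> ennreal"
  assumes [measurable]: "\<And>i. f i \<in> borel_measurable M"
  shows "(\<lambda>x. \<integral>\<^sup>+ i. f i x \<partial>count_space A) \<in> borel_measurable M"
proof -
  interpret sigma_finite_measure "count_space (UNIV :: 'i set)"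
    by (rule sigma_finite_measure_count_space)
  have "(\<lambda>(x, i). f i x * indicator A i) \<in> borel_measurable (M \<Otimes>\<^sub>M count_space UNIV)"
    by measurable
  then show ?thesis
    by (simp add: nn_integral_count_space_indicator borel_measurable_nn_integral)
qed

lemma nn_integral_count_space_le_UNIV:
  "(\<integral>\<^sup>+ x. f x \<partial>count_space A) \<le> (\<integral>\<^sup>+ x. f x \<partial>count_space UNIV)"
  by (simp add: nn_integral_count_space_indicator nn_integral_mono indicator_def)

definition set_nn_average :: "'a measure \<Rightarrow> 'a set \<Rightarrow> ('a \<Rightarrow> ennreal) \<Rightarrow> ennreal" where
  "set_nn_average \<mu> B f = (\<integral>\<^sup>+x\<in>B. f x \<partial>\<mu>) / emeasure \<mu> B"

lemma set_nn_average_mono: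
  "(\<And>x. x \<in> B \<Longrightarrow> f x \<le> g x) \<Longrightarrow> set_nn_average \<mu> B f \<le> set_nn_average \<mu> B g"
  unfolding set_nn_average_def
  by (intro divide_right_mono_ennreal nn_integral_mono) (simp add: indicator_def)

lemma set_nn_average_le_iff_integral_le:
  assumes "B \<in> sets \<mu>" "emeasure \<mu> B < \<infinity>"
  shows "set_nn_average \<mu> B f \<le> c \<longleftrightarrow> (\<integral>\<^sup>+x\<in>B. f x \<partial>\<mu>) \<le> c * emeasure \<mu> B"
proof (cases "emeasure \<mu> B = 0")
  case True
  then have "B \<in> null_sets \<mu>" using assms(1) by (simp add: null_sets_def)
  then show ?thesis using True by (simp add: set_nn_average_def nn_integral_null_set)
next
  case False
  then have cancel: "x * emeasure \<mu> B / emeasure \<mu> B = x" for x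
    using assms(2) by (simp add: ennreal_mult_divide_eq)
  show ?thesis unfolding set_nn_average_def
  proof
    assume "(\<integral>\<^sup>+x\<in>B. f x \<partial>\<mu>) / emeasure \<mu> B \<le> c"
    then have "(\<integral>\<^sup>+x\<in>B. f x \<partial>\<mu>) / emeasure \<mu> B * emeasure \<mu> B \<le> c * emeasure \<mu> B"
      by (rule mult_right_mono) simp
    then show "(\<integral>\<^sup>+x\<in>B. f x \<partial>\<mu>) \<le> c * emeasure \<mu> B"
      using False assms(2) by (simp add: ennreal_divide_times ennreal_divide_self)
  next
    assume "(\<integral>\<^sup>+x\<in>B. f x \<partial>\<mu>) \<le> c * emeasure \<mu> B"
    from divide_right_mono_ennreal[OF this, of "emeasure \<mu> B"]
    show "(\<integral>\<^sup>+x\<in>B. f x \<partial>\<mu>) / emeasure \<mu> B \<le> c" by (simp add: cancel)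
  qed
qed

definition kernel_mass :: "real \<Rightarrow> ennreal" where
  "kernel_mass r = (\<integral>\<^sup>+ n. ennreal (2 powr (- \<bar>real_of_int n\<bar> * r)) \<partial>count_space UNIV)"

lemma kernel_mass_shift:
  "(\<integral>\<^sup>+ j. ennreal (2 powr (- \<bar>real_of_int (j - m)\<bar> * r)) \<partial>count_space UNIV) = kernel_mass r"
proof -
  have "bij_betw (\<lambda>j::int. j - m) UNIV UNIV"
    by (rule bij_betwI[of _ _ _ "\<lambda>j. j + m"]) auto
  from nn_integral_bij_count_space[OF this] show ?thesis unfolding kernel_mass_def .
qed

lemma kernel_mass_finite: assumes "r > 0" shows "kernel_mass r < \<infinity>"
proof -
  define \<rho> where "\<rho> = (2::real) powr (- r)"
  have "(2::real) powr (- r) < 2 powr 0" using assms by (intro powr_less_mono) auto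
  then have \<rho>: "0 < \<rho>" "\<rho> < 1" unfolding \<rho>_def by auto
  define f :: "int \<Rightarrow> ennreal" where "f n = ennreal (\<rho> ^ nat n) * indicator {0..} n" for n
  have eq: "ennreal (2 powr (- \<bar>real_of_int n\<bar> * r)) = f \<bar>n\<bar>" for n
    unfolding f_def \<rho>_def by (simp add: powr_realpow[symmetric] powr_powr mult.commute)
  have split: "ennreal (2 powr (- \<bar>real_of_int n\<bar> * r)) \<le> f n + f (- n)" for n
    unfolding eq by (cases "n \<ge> 0") (simp_all add: add_increasing add_increasing2)
  have "bij_betw int UNIV {0::int..}" by (rule bij_betwI[of _ _ _ nat]) auto
  from nn_integral_bij_count_space[OF this, of "\<lambda>n. ennreal (\<rho> ^ nat n)"]
  have "(\<integral>\<^sup>+ n. f n \<partial>count_space UNIV) = (\<Sum>m. ennreal (\<rho> ^ m))"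
    unfolding f_def by (simp add: nn_integral_count_space_indicator nn_integral_count_space_nat)
  also have "\<dots> = ennreal (\<Sum>m. \<rho> ^ m)"
    using \<rho> by (intro suminf_ennreal2) (auto intro: summable_geometric)
  finally have f_finite: "(\<integral>\<^sup>+ n. f n \<partial>count_space UNIV) < \<infinity>" by simp
  have "bij_betw (\<lambda>n::int. - n) UNIV UNIV" by (rule bij_betwI[of _ _ _ "\<lambda>n. - n"]) auto
  from nn_integral_bij_count_space[OF this, of f]
  have reflect: "(\<integral>\<^sup>+ n. f (- n) \<partial>count_space UNIV) = (\<integral>\<^sup>+ n. f n \<partial>count_space UNIV)" .
  have "kernel_mass r \<le> (\<integral>\<^sup>+ n. f n + f (- n) \<partial>count_space UNIV)"
    unfolding kernel_mass_def by (intro nn_integral_mono split)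
  also have "\<dots> = (\<integral>\<^sup>+ n. f n \<partial>count_space UNIV) + (\<integral>\<^sup>+ n. f (- n) \<partial>count_space UNIV)"
    by (rule nn_integral_add) auto
  also have "\<dots> < \<infinity>" using f_finite reflect by (simp add: ennreal_add_less_top)
  finally show ?thesis .
qed

lemma one_le_kernel_mass: "1 \<le> kernel_mass r"
  unfolding kernel_mass_def
  using nn_integral_ge_point[of 0 UNIV "\<lambda>n. ennreal (2 powr (- \<bar>real_of_int n\<bar> * r))"] by simp

section \<open>Regularity turns average bounds into pointwise bounds\<close>

lemma essinf_on_le_of_average_powr_le:
  fixes F :: "'a \<Rightarrow> real"
  assumes B: "B \<in> sets \<mu>" and finite: "emeasure \<mu> B < \<infinity>" and nonzero: "emeasure \<mu> B \<noteq> 0"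
    and F: "\<And>x. 0 \<le> F x" and p: "p > 0" and m: "m \<ge> 0"
    and avg: "set_nn_average \<mu> B (\<lambda>x. ennreal (F x powr p)) \<le> ennreal (m powr p)"
  shows "essinf_on \<mu> B F \<le> ereal m"
proof (rule ccontr)
  assume "\<not> essinf_on \<mu> B F \<le> ereal m"
  then have "ereal m < essinf_on \<mu> B F" by simp
  then obtain e where "ereal m < ereal e" and e_below: "ereal e < essinf_on \<mu> B F"
    using ereal_dense2 by blast
  then have m_less_e: "m < e" by simp
  have "AE x in restrict_space \<mu> B. e \<le> F x"
    using esssup_AE[of "\<lambda>x. - ereal \<bar>F x\<bar>" "restrict_space \<mu> B"]
  proof (rule eventually_mono)
    fix x assume "- ereal \<bar>F x\<bar> \<le> esssup (restrict_space \<mu> B) (\<lambda>x. - ereal \<bar>F x\<bar>)"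
    then have "essinf_on \<mu> B F \<le> ereal \<bar>F x\<bar>"
      unfolding essinf_on_def by (simp add: ereal_uminus_le_reorder)
    with e_below have "ereal e < ereal \<bar>F x\<bar>" by (rule less_le_trans)
    then show "e \<le> F x" using F[of x] by simp
  qed
  then have above: "AE x in \<mu>. x \<in> B \<longrightarrow> e \<le> F x"
    using AE_restrict_space_iff[of B \<mu>] B by simp
  have "emeasure \<mu> B * ennreal (e powr p) = ennreal (e powr p) * emeasure \<mu> B"
    by (rule mult.commute)
  also have "\<dots> = (\<integral>\<^sup>+x\<in>B. ennreal (e powr p) \<partial>\<mu>)"
    using B by (simp add: nn_integral_cmult_indicator)
  also have "\<dots> \<le> (\<integral>\<^sup>+x\<in>B. ennreal (F x powr p) \<partial>\<mu>)"
    using above m_less_e m p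
    by (intro nn_integral_mono_AE, elim eventually_mono)
      (auto simp: indicator_def intro!: ennreal_leI powr_mono2)
  also have "\<dots> \<le> ennreal (m powr p) * emeasure \<mu> B"
    using set_nn_average_le_iff_integral_le[OF B finite] avg by simp
  also have "\<dots> = emeasure \<mu> B * ennreal (m powr p)"
    by (rule mult.commute)
  finally have "emeasure \<mu> B * ennreal (e powr p) \<le> emeasure \<mu> B * ennreal (m powr p)" .
  then have "ennreal (e powr p) \<le> ennreal (m powr p)"
    by (simp only: ennreal_mult_le_mult_iff[OF nonzero less_imp_neq[OF finite[unfolded infinity_ennreal_def]]])
  moreover have "ennreal (m powr p) < ennreal (e powr p)"
    using m_less_e m p by (intro ennreal_lessI powr_less_mono2) auto
  ultimately show False using leD by blast
qed

lemma AE_le_of_regular_average_powr_le: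
  fixes F :: "'a \<Rightarrow> real"
  assumes B: "B \<in> sets \<mu>" and finite: "emeasure \<mu> B < \<infinity>"
    and F: "\<And>x. 0 \<le> F x" and p: "p > 0" and m: "m \<ge> 0" and C: "C \<ge> 0"
    and regular: "esssup_on \<mu> B F \<le> ereal C * essinf_on \<mu> B F"
    and avg: "set_nn_average \<mu> B (\<lambda>x. ennreal (F x powr p)) \<le> ennreal (m powr p)"
  shows "AE x in \<mu>. x \<in> B \<longrightarrow> F x \<le> C * m"
proof (cases "emeasure \<mu> B = 0")
  case True
  then have "B \<in> null_sets \<mu>" using B by (simp add: null_sets_def)
  from AE_not_in[OF this] show ?thesis by (rule eventually_mono) auto
next
  case False
  have "ereal C * essinf_on \<mu> B F \<le> ereal C * ereal m"
    using C by (intro ereal_mult_left_mono essinf_on_le_of_average_powr_le[OF B finite False F p m avg])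
      simp
  with regular have sup: "esssup_on \<mu> B F \<le> ereal (C * m)" by simp
  have "AE x in restrict_space \<mu> B. F x \<le> C * m"
    using esssup_AE[of "\<lambda>x. ereal \<bar>F x\<bar>" "restrict_space \<mu> B"]
  proof (rule eventually_mono)
    fix x assume "ereal \<bar>F x\<bar> \<le> esssup (restrict_space \<mu> B) (\<lambda>x. ereal \<bar>F x\<bar>)"
    then have "ereal \<bar>F x\<bar> \<le> ereal (C * m)" using sup unfolding esssup_on_def by (rule order_trans)
    then show "F x \<le> C * m" using F[of x] by simp
  qed
  then show ?thesis using AE_restrict_space_iff[of B \<mu>] B by simp
qed

section \<open>The smoothing operator\<close>

definition smoothing :: "real \<Rightarrow> (int \<Rightarrow> 'a \<Rightarrow> real) \<Rightarrow> int \<Rightarrow> 'a \<Rightarrow> ennreal" where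
  "smoothing \<delta> g = (\<lambda>l x. \<integral>\<^sup>+ j. ennreal (2 powr (- \<bar>real_of_int (j - l)\<bar> * \<delta>) * g j x) \<partial>count_space UNIV)"

lemma nn_integral_kernel_convolution_le:
  fixes a :: "int \<Rightarrow> ennreal"
  shows "(\<integral>\<^sup>+ l. (\<integral>\<^sup>+ j. ennreal (2 powr (- \<bar>real_of_int (j - l)\<bar> * r)) * a j \<partial>count_space A) \<partial>count_space A')
    \<le> kernel_mass r * (\<integral>\<^sup>+ j. a j \<partial>count_space A)"
proof -
  have "(\<integral>\<^sup>+ l. (\<integral>\<^sup>+ j. ennreal (2 powr (- \<bar>real_of_int (j - l)\<bar> * r)) * a j \<partial>count_space A) \<partial>count_space A')
    = (\<integral>\<^sup>+ j. (\<integral>\<^sup>+ l. ennreal (2 powr (- \<bar>real_of_int (l - j)\<bar> * r)) * a j \<partial>count_space A') \<partial>count_space A)"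
    by (subst nn_integral_count_space_nn_integral) (auto simp: abs_minus_commute)
  also have "\<dots> \<le> (\<integral>\<^sup>+ j. kernel_mass r * a j \<partial>count_space A)"
  proof (intro nn_integral_mono)
    fix j
    have "(\<integral>\<^sup>+ l. ennreal (2 powr (- \<bar>real_of_int (l - j)\<bar> * r)) * a j \<partial>count_space A')
        \<le> (\<integral>\<^sup>+ l. ennreal (2 powr (- \<bar>real_of_int (l - j)\<bar> * r)) * a j \<partial>count_space UNIV)"
      by (rule nn_integral_count_space_le_UNIV)
    also have "\<dots> = (\<integral>\<^sup>+ l. ennreal (2 powr (- \<bar>real_of_int (l - j)\<bar> * r)) \<partial>count_space UNIV) * a j"
      by (rule nn_integral_multc) simp
    also have "\<dots> = kernel_mass r * a j"
      unfolding kernel_mass_shift ..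
    finally show "(\<integral>\<^sup>+ l. ennreal (2 powr (- \<bar>real_of_int (l - j)\<bar> * r)) * a j \<partial>count_space A')
        \<le> kernel_mass r * a j" .
  qed
  also have "\<dots> = kernel_mass r * (\<integral>\<^sup>+ j. a j \<partial>count_space A)"
    by (rule nn_integral_cmult) simp
  finally show ?thesis .
qed

lemma nn_integral_kernel_le_kernel_mass:
  "(\<integral>\<^sup>+ l. ennreal (2 powr (- \<bar>real_of_int (l + k)\<bar> * r)) \<partial>count_space A) \<le> kernel_mass r"
proof -
  have "(\<integral>\<^sup>+ l. ennreal (2 powr (- \<bar>real_of_int (l + k)\<bar> * r)) \<partial>count_space UNIV) = kernel_mass r"
    using kernel_mass_shift[of "- k" r] by simp
  then show ?thesis by (rule order_trans[OF nn_integral_count_space_le_UNIV eq_refl])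
qed

text \<open>Write \<open>2 powr (- \<bar>j - l\<bar> * \<delta>) = a j * a j\<close> with \<open>a j = 2 powr (- \<bar>j - l\<bar> * \<delta> / 2)\<close>: the
  kernel sum is at most \<open>kernel_mass (\<delta> / 2) * (SUP j. a j * G j)\<close>, and \<open>(a j * G j) powr p\<close> is
  bounded by the sum over \<open>j \<ge> - k\<close> if \<open>j \<ge> - k\<close>, and through \<open>G j \<le> b\<close> and
  \<open>\<bar>j - l\<bar> \<ge> \<bar>l + k\<bar>\<close> otherwise.\<close>

lemma kernel_sum_powr_le:
  fixes G :: "int \<Rightarrow> real"
  assumes p: "p > 0" and \<delta>: "\<delta> > 0" and G: "\<And>j. 0 \<le> G j" "\<And>j. G j \<le> b" and l: "l \<ge> - k"
  shows "enn_powr (\<integral>\<^sup>+ j. ennreal (2 powr (- \<bar>real_of_int (j - l)\<bar> * \<delta>) * G j) \<partial>count_space UNIV) p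
    \<le> enn_powr (kernel_mass (\<delta> / 2)) p *
      ((\<integral>\<^sup>+ j. ennreal (2 powr (- \<bar>real_of_int (j - l)\<bar> * (\<delta> / 2 * p))) * ennreal (G j powr p)
          \<partial>count_space {- k..})
       + ennreal (b powr p) * ennreal (2 powr (- \<bar>real_of_int (l + k)\<bar> * (\<delta> / 2 * p))))"
  (is "_ \<le> _ * ?R")
proof -
  define a where "a j = (2::real) powr (- \<bar>real_of_int (j - l)\<bar> * (\<delta> / 2))" for j
  have a: "a j > 0" for j unfolding a_def by simp
  have b: "b \<ge> 0" using G order_trans by blast
  have term_le: "ennreal ((a j * G j) powr p) \<le> ?R" for j
  proof (cases "j \<ge> - k")
    case True
    have "ennreal ((a j * G j) powr p)
        = ennreal (2 powr (- \<bar>real_of_int (j - l)\<bar> * (\<delta> / 2 * p))) * ennreal (G j powr p)"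
      unfolding a_def using G(1)[of j] by (simp add: powr_mult powr_powr ennreal_mult mult.assoc)
    also have "\<dots> \<le> (\<integral>\<^sup>+ j. ennreal (2 powr (- \<bar>real_of_int (j - l)\<bar> * (\<delta> / 2 * p))) * ennreal (G j powr p)
          \<partial>count_space {- k..})"
      using True by (intro nn_integral_ge_point) simp
    finally show ?thesis by (rule order_trans) simp
  next
    case False
    have "a j \<le> 2 powr (- \<bar>real_of_int (l + k)\<bar> * (\<delta> / 2))"
      unfolding a_def using False l \<delta> by (intro powr_mono) auto
    then have "a j * G j \<le> 2 powr (- \<bar>real_of_int (l + k)\<bar> * (\<delta> / 2)) * b"
      using G[of j] a[of j] by (intro mult_mono) auto
    then have "(a j * G j) powr p \<le> (2 powr (- \<bar>real_of_int (l + k)\<bar> * (\<delta> / 2)) * b) powr p"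
      using G(1)[of j] a[of j] p by (intro powr_mono2) auto
    also have "\<dots> = b powr p * 2 powr (- \<bar>real_of_int (l + k)\<bar> * (\<delta> / 2 * p))"
      using b by (simp add: powr_mult powr_powr mult_ac)
    finally have "ennreal ((a j * G j) powr p)
        \<le> ennreal (b powr p) * ennreal (2 powr (- \<bar>real_of_int (l + k)\<bar> * (\<delta> / 2 * p)))"
      by (simp add: ennreal_mult[symmetric] ennreal_leI)
    then show ?thesis by (rule order_trans) simp
  qed
  have sup_le: "ennreal (a j * G j) \<le> enn_powr ?R (1 / p)" for j
  proof -
    have "ennreal (a j * G j) = enn_powr (ennreal ((a j * G j) powr p)) (1 / p)"
      using a[of j] G(1)[of j] p by (simp add: enn_powr_ennreal powr_powr)
    also have "\<dots> \<le> enn_powr ?R (1 / p)" using term_le p by (intro enn_powr_mono) auto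
    finally show ?thesis .
  qed
  have "(\<integral>\<^sup>+ j. ennreal (2 powr (- \<bar>real_of_int (j - l)\<bar> * \<delta>) * G j) \<partial>count_space UNIV)
      = (\<integral>\<^sup>+ j. ennreal (a j) * ennreal (a j * G j) \<partial>count_space UNIV)"
  proof (rule nn_integral_cong)
    fix j
    have "2 powr (- \<bar>real_of_int (j - l)\<bar> * \<delta>) = a j * a j"
      unfolding a_def by (simp add: powr_add[symmetric] mult.commute)
    then show "ennreal (2 powr (- \<bar>real_of_int (j - l)\<bar> * \<delta>) * G j) = ennreal (a j) * ennreal (a j * G j)"
      using a[of j] G(1)[of j] by (simp add: ennreal_mult[symmetric] mult.assoc)
  qed
  also have "\<dots> \<le> (\<integral>\<^sup>+ j. ennreal (a j) * enn_powr ?R (1 / p) \<partial>count_space UNIV)"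
    by (intro nn_integral_mono mult_left_mono sup_le) auto
  also have "\<dots> = (\<integral>\<^sup>+ j. ennreal (a j) \<partial>count_space UNIV) * enn_powr ?R (1 / p)"
    by (rule nn_integral_multc) simp
  also have "\<dots> = kernel_mass (\<delta> / 2) * enn_powr ?R (1 / p)"
    unfolding a_def kernel_mass_shift ..
  finally have "enn_powr (\<integral>\<^sup>+ j. ennreal (2 powr (- \<bar>real_of_int (j - l)\<bar> * \<delta>) * G j) \<partial>count_space UNIV) p
      \<le> enn_powr (kernel_mass (\<delta> / 2) * enn_powr ?R (1 / p)) p"
    using p by (rule enn_powr_mono)
  also have "\<dots> = enn_powr (kernel_mass (\<delta> / 2)) p * ?R"
    using p by (simp add: enn_powr_mult enn_powr_enn_powr_inverse[of "1 / p", simplified])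
  finally show ?thesis .
qed

lemma sum_kernel_sum_powr_le:
  fixes G :: "int \<Rightarrow> real"
  assumes p: "p > 0" and \<delta>: "\<delta> > 0" and G: "\<And>j. 0 \<le> G j" "\<And>j. G j \<le> b"
  shows "(\<integral>\<^sup>+ l. enn_powr (\<integral>\<^sup>+ j. ennreal (2 powr (- \<bar>real_of_int (j - l)\<bar> * \<delta>) * G j) \<partial>count_space UNIV) p
            \<partial>count_space {- k..})
    \<le> enn_powr (kernel_mass (\<delta> / 2)) p * kernel_mass (\<delta> / 2 * p) *
       ((\<integral>\<^sup>+ j. ennreal (G j powr p) \<partial>count_space {- k..}) + ennreal (b powr p))"
proof -
  let ?\<beta> = "\<delta> / 2 * p"
  let ?K = "enn_powr (kernel_mass (\<delta> / 2)) p"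
  have "(\<integral>\<^sup>+ l. enn_powr (\<integral>\<^sup>+ j. ennreal (2 powr (- \<bar>real_of_int (j - l)\<bar> * \<delta>) * G j) \<partial>count_space UNIV) p
            \<partial>count_space {- k..})
    \<le> (\<integral>\<^sup>+ l. ?K * ((\<integral>\<^sup>+ j. ennreal (2 powr (- \<bar>real_of_int (j - l)\<bar> * ?\<beta>)) * ennreal (G j powr p)
          \<partial>count_space {- k..})
       + ennreal (b powr p) * ennreal (2 powr (- \<bar>real_of_int (l + k)\<bar> * ?\<beta>))) \<partial>count_space {- k..})"
    using kernel_sum_powr_le[OF p \<delta> G] by (intro nn_integral_mono) simp
  also have "\<dots> = ?K * ((\<integral>\<^sup>+ l. (\<integral>\<^sup>+ j. ennreal (2 powr (- \<bar>real_of_int (j - l)\<bar> * ?\<beta>)) * ennreal (G j powr p)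
          \<partial>count_space {- k..}) \<partial>count_space {- k..})
       + ennreal (b powr p) * (\<integral>\<^sup>+ l. ennreal (2 powr (- \<bar>real_of_int (l + k)\<bar> * ?\<beta>)) \<partial>count_space {- k..}))"
    by (simp add: nn_integral_cmult nn_integral_add)
  also have "\<dots> \<le> ?K * (kernel_mass ?\<beta> * (\<integral>\<^sup>+ j. ennreal (G j powr p) \<partial>count_space {- k..})
       + ennreal (b powr p) * kernel_mass ?\<beta>)"
    by (intro mult_left_mono add_mono nn_integral_kernel_convolution_le nn_integral_kernel_le_kernel_mass)
      simp_all
  finally show ?thesis by (simp add: algebra_simps)
qed

lemma set_nn_average_smoothing_le:
  fixes g :: "int \<Rightarrow> 'a \<Rightarrow> real"
  assumes B [measurable]: "B \<in> sets \<mu>" and finite: "emeasure \<mu> B < \<infinity>"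
    and g [measurable]: "\<And>j. g j \<in> borel_measurable \<mu>" and nonneg: "\<And>j x. 0 \<le> g j x"
    and bounded: "AE x in \<mu>. \<forall>j. g j x \<le> b"
    and avg: "\<And>j. j \<ge> - k \<Longrightarrow> set_nn_average \<mu> B (\<lambda>x. ennreal (g j x)) \<le> ennreal m"
  shows "set_nn_average \<mu> B (smoothing \<delta> g l) \<le> kernel_mass \<delta> * (ennreal m + ennreal b)"
proof -
  define a where "a j = (2::real) powr (- \<bar>real_of_int (j - l)\<bar> * \<delta>)" for j
  define F where "F j x = (ennreal (a j) * indicator {- k..} j) * (ennreal (g j x) * indicator B x)
    + (ennreal (a j) * ennreal b) * indicator B x" for j x
  have "(\<integral>\<^sup>+x\<in>B. smoothing \<delta> g l x \<partial>\<mu>) \<le> (\<integral>\<^sup>+x. (\<integral>\<^sup>+ j. F j x \<partial>count_space UNIV) \<partial>\<mu>)"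
  proof (rule nn_integral_mono_AE)
    show "AE x in \<mu>. smoothing \<delta> g l x * indicator B x \<le> (\<integral>\<^sup>+ j. F j x \<partial>count_space UNIV)"
      using bounded
    proof (rule eventually_mono)
      fix x assume x: "\<forall>j. g j x \<le> b"
      have "ennreal (a j * g j x) \<le> F j x" if "x \<in> B" for j
      proof (cases "j \<ge> - k")
        case True
        then show ?thesis using that nonneg unfolding F_def a_def by (simp add: ennreal_mult add_increasing2)
      next
        case False
        have "ennreal (a j * g j x) \<le> ennreal (a j * b)"
          using x nonneg unfolding a_def by (intro ennreal_leI mult_left_mono) auto
        moreover have "0 \<le> b" using x nonneg order_trans by blast
        ultimately show ?thesis using that False unfolding F_def a_def by (simp add: ennreal_mult)
      qed
      then show "smoothing \<delta> g l x * indicator B x \<le> (\<integral>\<^sup>+ j. F j x \<partial>count_space UNIV)"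
        unfolding smoothing_def a_def by (cases "x \<in> B") (auto intro: nn_integral_mono)
    qed
  qed
  also have "\<dots> = (\<integral>\<^sup>+ j. (\<integral>\<^sup>+x. F j x \<partial>\<mu>) \<partial>count_space UNIV)"
    unfolding F_def by (rule nn_integral_count_space_nn_integral) auto
  also have "\<dots> \<le> (\<integral>\<^sup>+ j. ennreal (a j) * ((ennreal m + ennreal b) * emeasure \<mu> B) \<partial>count_space UNIV)"
  proof (rule nn_integral_mono)
    fix j
    have "(\<integral>\<^sup>+x. F j x \<partial>\<mu>) = ennreal (a j) * (indicator {- k..} j * (\<integral>\<^sup>+x\<in>B. ennreal (g j x) \<partial>\<mu>)
        + ennreal b * emeasure \<mu> B)"
      unfolding F_def by (simp add: nn_integral_add nn_integral_cmult nn_integral_cmult_indicator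
          distrib_left mult.assoc)
    also have "\<dots> \<le> ennreal (a j) * ((ennreal m + ennreal b) * emeasure \<mu> B)"
      using avg set_nn_average_le_iff_integral_le[OF B finite]
      by (cases "j \<ge> - k") (auto simp: distrib_right intro!: mult_left_mono add_mono)
    finally show "(\<integral>\<^sup>+x. F j x \<partial>\<mu>) \<le> ennreal (a j) * ((ennreal m + ennreal b) * emeasure \<mu> B)" .
  qed
  also have "\<dots> = (\<integral>\<^sup>+ j. ennreal (a j) \<partial>count_space UNIV) * ((ennreal m + ennreal b) * emeasure \<mu> B)"
    by (rule nn_integral_multc) simp
  also have "\<dots> = kernel_mass \<delta> * (ennreal m + ennreal b) * emeasure \<mu> B"
    unfolding a_def kernel_mass_shift by (simp add: mult.assoc)
  finally show ?thesis by (simp add: set_nn_average_le_iff_integral_le[OF B finite])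
qed

lemma set_nn_average_sum_smoothing_powr_le:
  fixes g :: "int \<Rightarrow> 'a \<Rightarrow> real"
  assumes B [measurable]: "B \<in> sets \<mu>" and finite: "emeasure \<mu> B < \<infinity>"
    and g [measurable]: "\<And>j. g j \<in> borel_measurable \<mu>" and nonneg: "\<And>j x. 0 \<le> g j x"
    and bounded: "AE x in \<mu>. \<forall>j. g j x \<le> b" and p: "p > 0" and \<delta>: "\<delta> > 0"
    and avg: "set_nn_average \<mu> B (\<lambda>x. \<integral>\<^sup>+ j. ennreal (g j x powr p) \<partial>count_space {- k..})
                \<le> ennreal (m powr p)"
  shows "set_nn_average \<mu> B (\<lambda>x. \<integral>\<^sup>+ l. enn_powr (smoothing \<delta> g l x) p \<partial>count_space {- k..})
    \<le> enn_powr (kernel_mass (\<delta> / 2)) p * kernel_mass (\<delta> / 2 * p) * (ennreal (m powr p) + ennreal (b powr p))"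
proof -
  let ?K = "enn_powr (kernel_mass (\<delta> / 2)) p * kernel_mass (\<delta> / 2 * p)"
  define W where "W x = (\<integral>\<^sup>+ j. ennreal (g j x powr p) \<partial>count_space {- k..})" for x
  have [measurable]: "W \<in> borel_measurable \<mu>" unfolding W_def by measurable
  have "(\<integral>\<^sup>+x\<in>B. (\<integral>\<^sup>+ l. enn_powr (smoothing \<delta> g l x) p \<partial>count_space {- k..}) \<partial>\<mu>)
      \<le> (\<integral>\<^sup>+x. ?K * (W x * indicator B x) + ?K * ennreal (b powr p) * indicator B x \<partial>\<mu>)"
    using bounded
  proof (intro nn_integral_mono_AE, elim eventually_mono)
    fix x assume "\<forall>j. g j x \<le> b"
    then show "(\<integral>\<^sup>+ l. enn_powr (smoothing \<delta> g l x) p \<partial>count_space {- k..}) * indicator B x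
        \<le> ?K * (W x * indicator B x) + ?K * ennreal (b powr p) * indicator B x"
      using sum_kernel_sum_powr_le[OF p \<delta>, of "\<lambda>j. g j x" b k] nonneg
      unfolding smoothing_def W_def by (cases "x \<in> B") (simp_all add: distrib_left)
  qed
  also have "\<dots> = ?K * (\<integral>\<^sup>+x\<in>B. W x \<partial>\<mu>) + ?K * ennreal (b powr p) * emeasure \<mu> B"
    by (simp add: nn_integral_add nn_integral_cmult nn_integral_cmult_indicator)
  also have "\<dots> \<le> ?K * (ennreal (m powr p) * emeasure \<mu> B) + ?K * ennreal (b powr p) * emeasure \<mu> B"
    using avg set_nn_average_le_iff_integral_le[OF B finite] unfolding W_def
    by (intro add_mono mult_left_mono) auto
  finally show ?thesis
    by (simp add: set_nn_average_le_iff_integral_le[OF B finite] algebra_simps)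
qed

section \<open>Dyadic balls and Carleson norms\<close>

locale dyadic_structure =
  fixes gm :: "'a::euclidean_space \<Rightarrow> 'a \<Rightarrow> 'a" and v :: "'a \<Rightarrow> real" and \<mu> :: "'a measure"
    and nrm :: "'a \<Rightarrow> real" and \<gamma> :: real and xs :: "nat \<Rightarrow> 'a"
  assumes hom_group: "homogeneous_group gm v" and haar: "haar_measure gm \<mu>"
    and quasi_norm: "hom_quasi_norm gm v nrm \<gamma>" and centres: "maximal_disjoint_centres gm nrm \<gamma> xs"
begin

abbreviation dball :: "int \<Rightarrow> nat \<Rightarrow> 'a set" where
  "dball k l \<equiv> dyball gm v nrm xs k l"

abbreviation carleson :: "ennreal \<Rightarrow> (int \<Rightarrow> 'a \<Rightarrow> ennreal) \<Rightarrow> ennreal" where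
  "carleson q g \<equiv> carleson_norm gm v nrm xs \<mu> q g"

definition regular :: "real \<Rightarrow> (int \<Rightarrow> 'a \<Rightarrow> real) \<Rightarrow> bool" where
  "regular C g \<longleftrightarrow> (\<forall>j l. esssup_on \<mu> (dball (- j) l) (g j) \<le> ereal C * essinf_on \<mu> (dball (- j) l) (g j))"

lemma sets_haar: "sets \<mu> = sets borel"
  using haar unfolding haar_measure_def by blast

lemma borel_measurable_haar_iff: "f \<in> borel_measurable \<mu> \<longleftrightarrow> f \<in> borel_measurable borel"
  using measurable_cong_sets[OF sets_haar refl] by blast

lemma sets_dball [measurable]: "dball k l \<in> sets \<mu>"
  unfolding dyball_def sets_haar by (intro borel_open open_qball[OF hom_group quasi_norm])

lemma emeasure_dball_finite: "emeasure \<mu> (dball k l) < \<infinity>"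
proof -
  obtain K where K: "compact K" "dball k l \<subseteq> K"
    using qball_subset_compact[OF hom_group quasi_norm] unfolding dyball_def by blast
  have "K \<in> sets \<mu>" unfolding sets_haar using K(1) by (intro borel_closed compact_imp_closed)
  then have "emeasure \<mu> (dball k l) \<le> emeasure \<mu> K" by (rule emeasure_mono[OF K(2)])
  also have "\<dots> < \<infinity>" using haar K(1) unfolding haar_measure_def by blast
  finally show ?thesis .
qed

lemma carleson_infinity_eq:
  "carleson \<infinity> g = (SUP kl. SUP j\<in>{- fst kl..}. set_nn_average \<mu> (dball (fst kl) (snd kl)) (g j))"
  unfolding carleson_norm_def set_nn_average_def by simp

lemma carleson_finite_eq:
  "q \<noteq> \<infinity> \<Longrightarrow> carleson q g = (SUP kl. enn_powr (set_nn_average \<mu> (dball (fst kl) (snd kl))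
      (\<lambda>x. \<integral>\<^sup>+ j. enn_powr (g j x) (enn2real q) \<partial>count_space {- fst kl..})) (1 / enn2real q))"
  unfolding carleson_norm_def set_nn_average_def by simp

lemma average_le_carleson_infinity:
  "j \<ge> - k \<Longrightarrow> set_nn_average \<mu> (dball k l) (g j) \<le> carleson \<infinity> g"
  unfolding carleson_infinity_eq by (rule SUP_upper2[of "(k, l)"]) (auto intro: SUP_upper)

lemma carleson_infinity_le:
  "(\<And>k l j. j \<ge> - k \<Longrightarrow> set_nn_average \<mu> (dball k l) (g j) \<le> M) \<Longrightarrow> carleson \<infinity> g \<le> M"
  unfolding carleson_infinity_eq by (auto intro!: SUP_least)

lemma average_powr_le_carleson_finite:
  assumes "q \<noteq> \<infinity>" "q > 0" "carleson q g \<le> ennreal m" "m \<ge> 0"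
  shows "set_nn_average \<mu> (dball k l)
           (\<lambda>x. \<integral>\<^sup>+ j. enn_powr (g j x) (enn2real q) \<partial>count_space {- k..}) \<le> ennreal (m powr enn2real q)"
proof (rule enn_powr_inverse_le_ennreal_imp)
  show "enn2real q > 0" using assms(1,2) by (simp add: enn2real_positive_iff top.not_eq_extremum)
  show "enn_powr (set_nn_average \<mu> (dball k l)
      (\<lambda>x. \<integral>\<^sup>+ j. enn_powr (g j x) (enn2real q) \<partial>count_space {- k..})) (1 / enn2real q) \<le> ennreal m"
    using assms(3) unfolding carleson_finite_eq[OF assms(1)]
    by (rule order_trans[rotated]) (rule SUP_upper2[of "(k, l)"], auto)
qed (use assms in simp)

lemma carleson_finite_le:
  "q \<noteq> \<infinity> \<Longrightarrow> (\<And>k l. enn_powr (set_nn_average \<mu> (dball k l)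
      (\<lambda>x. \<integral>\<^sup>+ j. enn_powr (g j x) (enn2real q) \<partial>count_space {- k..})) (1 / enn2real q) \<le> M)
   \<Longrightarrow> carleson q g \<le> M"
  unfolding carleson_finite_eq by (auto intro!: SUP_least)

lemma AE_bounded_of_regular:
  assumes g: "\<And>j x. 0 \<le> g j x" and p: "p > 0" and m: "m \<ge> 0" and C: "C \<ge> 0"
    and regular: "regular C g"
    and avg: "\<And>j l. set_nn_average \<mu> (dball (- j) l) (\<lambda>x. ennreal (g j x powr p)) \<le> ennreal (m powr p)"
  shows "AE x in \<mu>. \<forall>j. g j x \<le> C * m"
proof -
  have "AE x in \<mu>. x \<in> dball (- j) l \<longrightarrow> g j x \<le> C * m" for j l
    using regular unfolding regular_def
    by (intro AE_le_of_regular_average_powr_le[OF sets_dball emeasure_dball_finite g p m C _ avg])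
      blast
  then have "AE x in \<mu>. \<forall>l. x \<in> dball (- j) l \<longrightarrow> g j x \<le> C * m" for j
    by (subst AE_all_countable) blast
  then have "AE x in \<mu>. \<forall>j l. x \<in> dball (- j) l \<longrightarrow> g j x \<le> C * m"
    by (subst AE_all_countable) blast
  then show ?thesis
    by (rule eventually_mono)
      (metis dyball_covers[OF hom_group quasi_norm centres])
qed

lemma carleson_smoothing_le_infinity:
  assumes \<delta>: "\<delta> > 0" and C: "C \<ge> 0"
    and g: "\<And>j. g j \<in> borel_measurable \<mu>" "\<And>j x. 0 \<le> g j x" and regular: "regular C g"
  shows "carleson \<infinity> (smoothing \<delta> g) \<le> kernel_mass \<delta> * ennreal (1 + C) * carleson \<infinity> (\<lambda>j x. ennreal (g j x))"
proof (cases "carleson \<infinity> (\<lambda>j x. ennreal (g j x))" rule: ennreal_cases)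
  case top
  have "kernel_mass \<delta> * ennreal (1 + C) \<noteq> 0"
    using one_le_kernel_mass[of \<delta>] C by auto
  then show ?thesis using top by (simp add: ennreal_mult_top)
next
  case (real m)
  have avg: "set_nn_average \<mu> (dball k l) (\<lambda>x. ennreal (g j x)) \<le> ennreal m" if "j \<ge> - k" for k l j
    using average_le_carleson_infinity[OF that, of l "\<lambda>j x. ennreal (g j x)"] real(2) by simp
  have "set_nn_average \<mu> (dball (- j) l) (\<lambda>x. ennreal (g j x powr 1)) \<le> ennreal (m powr 1)" for j l
    using avg[of "- j" j l] g(2) real(1) by simp
  then have "AE x in \<mu>. \<forall>j. g j x \<le> C * m"
    by (rule AE_bounded_of_regular[OF g(2) zero_less_one real(1) C regular])
  then have "carleson \<infinity> (smoothing \<delta> g) \<le> kernel_mass \<delta> * (ennreal m + ennreal (C * m))"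
    by (intro carleson_infinity_le set_nn_average_smoothing_le[OF sets_dball emeasure_dball_finite g]
        avg)
  also have "\<dots> = kernel_mass \<delta> * ennreal (1 + C) * ennreal m"
    using C real(1) by (simp add: ennreal_mult[symmetric] ennreal_plus[symmetric] distrib_right mult.assoc
        del: ennreal_plus)
  finally show ?thesis using real(2) by simp
qed

lemma carleson_smoothing_le_finite:
  assumes q: "q \<noteq> \<infinity>" "enn2real q = p" and p: "p > 0" and \<delta>: "\<delta> > 0" and C: "C \<ge> 0"
    and g: "\<And>j. g j \<in> borel_measurable \<mu>" "\<And>j x. 0 \<le> g j x" and regular: "regular C g"
  shows "carleson q (smoothing \<delta> g)
    \<le> enn_powr (enn_powr (kernel_mass (\<delta> / 2)) p * kernel_mass (\<delta> / 2 * p) * (1 + ennreal (C powr p))) (1 / p)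
      * carleson q (\<lambda>j x. ennreal (g j x))"
proof -
  define K where "K = enn_powr (kernel_mass (\<delta> / 2)) p * kernel_mass (\<delta> / 2 * p) * (1 + ennreal (C powr p))"
  show ?thesis
  proof (cases "carleson q (\<lambda>j x. ennreal (g j x))" rule: ennreal_cases)
    case top
    have "1 \<le> enn_powr (kernel_mass (\<delta> / 2)) p"
      using one_le_enn_powr[OF one_le_kernel_mass p] .
    then have "1 * 1 * 1 \<le> K"
      unfolding K_def by (intro mult_mono one_le_kernel_mass) (simp_all add: add_increasing2)
    then have "enn_powr K (1 / p) \<noteq> 0" using p one_le_enn_powr[of K "1 / p"] by auto
    then show ?thesis using top unfolding K_def by (simp add: ennreal_mult_top)
  next
    case (real m)
    have q_pos: "q > 0" using q p by (auto simp: zero_less_iff_neq_zero)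
    have avg: "set_nn_average \<mu> (dball k l) (\<lambda>x. \<integral>\<^sup>+ j. ennreal (g j x powr p) \<partial>count_space {- k..})
        \<le> ennreal (m powr p)" for k l
      using average_powr_le_carleson_finite[OF q(1) q_pos, of "\<lambda>j x. ennreal (g j x)" m k l]
        real g(2) q(2) by (simp add: enn_powr_ennreal)
    have "ennreal (g j x powr p) \<le> (\<integral>\<^sup>+ i. ennreal (g i x powr p) \<partial>count_space {- (- j)..})" for j x
      using nn_integral_ge_point[of j "{- (- j)..}" "\<lambda>i. ennreal (g i x powr p)"] by simp
    then have "set_nn_average \<mu> (dball (- j) l) (\<lambda>x. ennreal (g j x powr p)) \<le> ennreal (m powr p)" for j l
      by (intro order_trans[OF set_nn_average_mono avg])
    then have bounded: "AE x in \<mu>. \<forall>j. g j x \<le> C * m"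
      by (rule AE_bounded_of_regular[OF g(2) p real(1) C regular])
    have sum_powr: "ennreal (m powr p) + ennreal ((C * m) powr p) = (1 + ennreal (C powr p)) * ennreal (m powr p)"
      using C real(1) by (simp add: powr_mult ennreal_mult distrib_right)
    have "enn_powr (set_nn_average \<mu> (dball k l)
        (\<lambda>x. \<integral>\<^sup>+ j. enn_powr (smoothing \<delta> g j x) (enn2real q) \<partial>count_space {- k..})) (1 / enn2real q)
      \<le> enn_powr (K * ennreal (m powr p)) (1 / p)" for k l
      using set_nn_average_sum_smoothing_powr_le[OF sets_dball emeasure_dball_finite g bounded p \<delta> avg]
      unfolding q(2) sum_powr K_def using p by (intro enn_powr_mono) (simp_all add: mult.assoc)
    then have "carleson q (smoothing \<delta> g) \<le> enn_powr (K * ennreal (m powr p)) (1 / p)"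
      by (rule carleson_finite_le[OF q(1)])
    also have "\<dots> = enn_powr K (1 / p) * ennreal m"
      using p real(1) by (simp add: enn_powr_mult enn_powr_ennreal powr_powr)
    finally show ?thesis using real(2) unfolding K_def by simp
  qed
qed

lemma carleson_smoothing_bounded:
  assumes q: "q > 0" and \<delta>: "\<delta> > 0" and C: "C \<ge> 0"
  shows "\<exists>K<\<infinity>. \<forall>g. (\<forall>j. g j \<in> borel_measurable \<mu>) \<longrightarrow> (\<forall>j x. 0 \<le> g j x) \<longrightarrow> regular C g \<longrightarrow>
           carleson q (smoothing \<delta> g) \<le> K * carleson q (\<lambda>j x. ennreal (g j x))"
proof (cases "q = \<infinity>")
  case True
  then show ?thesis
    using carleson_smoothing_le_infinity[OF \<delta> C] kernel_mass_finite[OF \<delta>]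
    by (intro exI[of _ "kernel_mass \<delta> * ennreal (1 + C)"]) (auto simp: ennreal_mult_less_top)
next
  case False
  define p where "p = enn2real q"
  have p: "p > 0"
    using q False unfolding p_def by (simp add: enn2real_positive_iff top.not_eq_extremum)
  let ?K = "enn_powr (kernel_mass (\<delta> / 2)) p * kernel_mass (\<delta> / 2 * p) * (1 + ennreal (C powr p))"
  have "enn_powr (kernel_mass (\<delta> / 2)) p < \<infinity>"
    using \<delta> by (intro enn_powr_less_top kernel_mass_finite) simp
  then have "?K < \<infinity>"
    using kernel_mass_finite[of "\<delta> / 2 * p"] \<delta> p by (simp add: ennreal_mult_less_top)
  then have "enn_powr ?K (1 / p) < \<infinity>" by (rule enn_powr_less_top)
  then show ?thesis using carleson_smoothing_le_finite[OF False p_def[symmetric] p \<delta> C] by blast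
qed

end

theorem lemma3p13:
  fixes gm :: "'a::euclidean_space \<Rightarrow> 'a \<Rightarrow> 'a"
    and v :: "'a \<Rightarrow> real" and \<mu> :: "'a measure"
    and nrm :: "'a \<Rightarrow> real" and \<gamma> :: real and xs :: "nat \<Rightarrow> 'a"
    and q :: ennreal and \<delta> C\<^sub>1 :: real
  assumes "homogeneous_group gm v"
    and "haar_measure gm \<mu>"
    and "hom_quasi_norm gm v nrm \<gamma>"
    and "maximal_disjoint_centres gm nrm \<gamma> xs"
    and "q > 0" and "\<delta> > 0" and "C\<^sub>1 > 0"
  shows "\<exists>C\<^sub>2>0. \<forall>g :: int \<Rightarrow> 'a \<Rightarrow> real.
           (\<forall>j. g j \<in> borel_measurable borel) \<longrightarrow>
           (\<forall>j x. 0 \<le> g j x) \<longrightarrow>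
           (\<forall>j l. esssup_on \<mu> (dyball gm v nrm xs (- j) l) (g j)
                   \<le> ereal C\<^sub>1 * essinf_on \<mu> (dyball gm v nrm xs (- j) l) (g j)) \<longrightarrow>
           carleson_norm gm v nrm xs \<mu> q
             (\<lambda>m x. \<integral>\<^sup>+ j. ennreal (2 powr (- \<bar>real_of_int (j - m)\<bar> * \<delta>) * g j x) \<partial>count_space UNIV)
           \<le> ennreal C\<^sub>2 * carleson_norm gm v nrm xs \<mu> q (\<lambda>j x. ennreal (g j x))"
proof -
  interpret dyadic_structure gm v \<mu> nrm \<gamma> xs
    using assms(1-4) by unfold_locales
  obtain K where K: "K < \<infinity>" and bound: "\<And>g. \<forall>j. g j \<in> borel_measurable \<mu> \<Longrightarrow> \<forall>j x. 0 \<le> g j x \<Longrightarrow>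
      regular C\<^sub>1 g \<Longrightarrow> carleson_norm gm v nrm xs \<mu> q (smoothing \<delta> g)
        \<le> K * carleson_norm gm v nrm xs \<mu> q (\<lambda>j x. ennreal (g j x))"
    using carleson_smoothing_bounded[OF assms(5,6), of C\<^sub>1] assms(7) by auto
  show ?thesis
  proof (intro exI[of _ "enn2real K + 1"] conjI allI impI)
    show "enn2real K + 1 > 0" by (simp add: add_nonneg_pos)
    fix g :: "int \<Rightarrow> 'a \<Rightarrow> real"
    assume "\<forall>j. g j \<in> borel_measurable borel" "\<forall>j x. 0 \<le> g j x"
      "\<forall>j l. esssup_on \<mu> (dyball gm v nrm xs (- j) l) (g j)
          \<le> ereal C\<^sub>1 * essinf_on \<mu> (dyball gm v nrm xs (- j) l) (g j)"
    then have "carleson_norm gm v nrm xs \<mu> q (smoothing \<delta> g)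
        \<le> K * carleson_norm gm v nrm xs \<mu> q (\<lambda>j x. ennreal (g j x))"
      by (intro bound) (simp_all add: borel_measurable_haar_iff regular_def)
    also have "\<dots> \<le> ennreal (enn2real K + 1) * carleson_norm gm v nrm xs \<mu> q (\<lambda>j x. ennreal (g j x))"
    proof (rule mult_right_mono)
      show "K \<le> ennreal (enn2real K + 1)"
        using K by (cases K rule: ennreal_cases) (auto intro: ennreal_leI)
    qed simp
    finally show "carleson_norm gm v nrm xs \<mu> q
        (\<lambda>m x. \<integral>\<^sup>+ j. ennreal (2 powr (- \<bar>real_of_int (j - m)\<bar> * \<delta>) * g j x) \<partial>count_space UNIV)
      \<le> ennreal (enn2real K + 1) * carleson_norm gm v nrm xs \<mu> q (\<lambda>j x. ennreal (g j x))"
      unfolding smoothing_def .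
  qed
qed

end
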